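(* Let $\mathcal{H}$ be a hypergraph on vertex set $V$ with $\textsc{VC-dim}(\mathcal{H})<k$. Then $|\mathrm{ext}_k(\mathcal{H})|=O(|V|^k)$.
   Context: A hypergraph $\mathcal{H}$ on $V$ is a family of subsets (hyperedges) of $V$. A $k$-trace on $V$ is a pair $(T,S)$ with $S\subseteq V$, $|S|=k$, $T\subseteq S$; a set $F\subseteq V$ realizes $(T,S)$ if $F\cap S=T$. $\mathrm{traces}_k(F)$ is the set of $k$-traces realized by $F$, and $\mathrm{traces}_k(\mathcal{H})=\bigcup_{F\in\mathcal{H}}\mathrm{traces}_k(F)$. The $k$-extension $\mathrm{ext}_k(\mathcal{H})$ is the hypergraph on $V$ whose hyperedges are all $E\subseteq V$ with $\mathrm{traces}_k(E)\subseteq\mathrm{traces}_k(\mathcal{H})$. A set $U$ is shattered by $\mathcal{H}$ if for each $U'\subseteq U$ some $F\in\mathcal{H}$ has $F\cap U=U'$; $\textsc{VC-dim}(\mathcal{H})$ is the largest size of a shattered set. *)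

theory Defs
  imports Complex_Main
begin

definition traces :: "nat \<Rightarrow> 'a set \<Rightarrow> 'a set \<Rightarrow> ('a set \<times> 'a set) set" where
  "traces k V F = {(T, S). S \<subseteq> V \<and> card S = k \<and> T \<subseteq> S \<and> F \<inter> S = T}"

definition traces_hg :: "nat \<Rightarrow> 'a set \<Rightarrow> 'a set set \<Rightarrow> ('a set \<times> 'a set) set" where
  "traces_hg k V H = (\<Union>F\<in>H. traces k V F)"

definition ext :: "nat \<Rightarrow> 'a set \<Rightarrow> 'a set set \<Rightarrow> 'a set set" where
  "ext k V H = {E. E \<subseteq> V \<and> traces k V E \<subseteq> traces_hg k V H}"

definition shatters :: "'a set set \<Rightarrow> 'a set \<Rightarrow> bool" where
  "shatters H U \<longleftrightarrow> (\<forall>U'\<subseteq>U. \<exists>F\<in>H. F \<inter> U = U')"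

definition vc_dim_less :: "'a set \<Rightarrow> 'a set set \<Rightarrow> nat \<Rightarrow> bool" where
  "vc_dim_less V H k \<longleftrightarrow> (\<forall>U\<subseteq>V. shatters H U \<longrightarrow> card U < k)"

end

theory Submission
  imports Defs
begin

text \<open>Every k-trace of a member of \<open>ext k V H\<close> is realised by \<open>H\<close>, so a k-set shattered by the
  extension is already shattered by \<open>H\<close>; hence \<open>ext k V H\<close> also has VC-dimension below k.
  By Pajor's lemma a family of subsets of V has at most as many members as it has shattered
  subsets of V, and there are at most \<open>\<Sum>i<k. n choose i \<le> k * n ^ k\<close> subsets of size below k.\<close>

lemma shatters_mono: "G \<subseteq> F \<Longrightarrow> shatters G U \<Longrightarrow> shatters F U"
  unfolding shatters_def by (meson subsetD)

lemma shatters_remove_point: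
  assumes "x \<notin> U" and "shatters ((\<lambda>A. A - {x}) ` {A \<in> F. x \<in> A}) U"
  shows "shatters F U"
  unfolding shatters_def
proof (intro allI impI)
  fix U' assume "U' \<subseteq> U"
  then obtain B where B: "B \<in> (\<lambda>A. A - {x}) ` {A \<in> F. x \<in> A}" "B \<inter> U = U'"
    using assms(2) unfolding shatters_def by (meson subsetD)
  from B(1) obtain A where "A \<in> F" "B = A - {x}" by auto
  moreover have "(A - {x}) \<inter> U = A \<inter> U" using \<open>x \<notin> U\<close> by auto
  ultimately show "\<exists>A\<in>F. A \<inter> U = U'" using B(2) by auto
qed

lemma shatters_insert_point:
  assumes "x \<notin> U"
    and avoiding: "shatters {A \<in> F. x \<notin> A} U"
    and containing: "shatters ((\<lambda>A. A - {x}) ` {A \<in> F. x \<in> A}) U"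
  shows "shatters F (insert x U)"
  unfolding shatters_def
proof (intro allI impI)
  fix U' assume U': "U' \<subseteq> insert x U"
  show "\<exists>A\<in>F. A \<inter> insert x U = U'"
  proof (cases "x \<in> U'")
    case True
    have "U' - {x} \<subseteq> U" using U' by auto
    then obtain B where B: "B \<in> (\<lambda>A. A - {x}) ` {A \<in> F. x \<in> A}" "B \<inter> U = U' - {x}"
      using containing unfolding shatters_def by (meson subsetD)
    from B(1) obtain A where "A \<in> F" "x \<in> A" "B = A - {x}" by auto
    moreover from this have "A \<inter> insert x U = U'" using B(2) True \<open>x \<notin> U\<close> by auto
    ultimately show ?thesis by auto
  next
    case False
    then have "U' \<subseteq> U" using U' by auto
    then obtain A where A: "A \<in> {A \<in> F. x \<notin> A}" "A \<inter> U = U'"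
      using avoiding unfolding shatters_def by (meson subsetD)
    then have "A \<inter> insert x U = U'" by auto
    with A(1) show ?thesis by auto
  qed
qed

text \<open>Pajor's lemma, by the standard split of \<open>F\<close> along a vertex \<open>x\<close>: sets shattered by either
  half are shattered by \<open>F\<close>, and sets shattered by both stay shattered after adding \<open>x\<close>.\<close>
lemma card_le_card_shattered:
  assumes "finite V" and "F \<subseteq> Pow V"
  shows "card F \<le> card {U \<in> Pow V. shatters F U}"
  using assms
proof (induction V arbitrary: F rule: finite_induct)
  case empty
  then consider "F = {}" | "F = {{}}" by auto
  then show ?case
  proof cases
    case 2
    then have "{U \<in> Pow {}. shatters F U} = {{}}" by (auto simp: shatters_def)
    then show ?thesis using 2 by simp
  qed simp
next
  case (insert x V)
  define F0 where "F0 = {A \<in> F. x \<notin> A}"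
  define F1 where "F1 = (\<lambda>A. A - {x}) ` {A \<in> F. x \<in> A}"
  define S0 where "S0 = {U \<in> Pow V. shatters F0 U}"
  define S1 where "S1 = {U \<in> Pow V. shatters F1 U}"
  have "finite F" using insert.prems insert.hyps(1) finite_subset by blast
  have fin_S: "finite S0" "finite S1" using insert.hyps(1) by (simp_all add: S0_def S1_def)
  have "inj_on (\<lambda>A. A - {x}) {A \<in> F. x \<in> A}"
    by (rule inj_onI) (metis insert_Diff mem_Collect_eq)
  then have "card F1 = card {A \<in> F. x \<in> A}" by (simp add: F1_def card_image)
  moreover have "card F = card F0 + card {A \<in> F. x \<in> A}"
  proof -
    have "F = F0 \<union> {A \<in> F. x \<in> A}" "F0 \<inter> {A \<in> F. x \<in> A} = {}" by (auto simp: F0_def)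
    then show ?thesis using \<open>finite F\<close> by (metis card_Un_disjoint finite_Un)
  qed
  ultimately have "card F = card F0 + card F1" by simp
  also have "\<dots> \<le> card S0 + card S1"
  proof -
    have "F0 \<subseteq> Pow V" "F1 \<subseteq> Pow V" using insert.prems by (auto simp: F0_def F1_def)
    then show ?thesis unfolding S0_def S1_def by (intro add_mono insert.IH)
  qed
  also have "\<dots> = card (S0 \<union> S1) + card (insert x ` (S0 \<inter> S1))"
  proof -
    have "inj_on (insert x) (S0 \<inter> S1)"
      using insert.hyps(2) by (intro inj_onI) (auto simp: S0_def insert_ident)
    then show ?thesis using card_Un_Int[OF fin_S] by (simp add: card_image)
  qed
  also have "\<dots> = card (S0 \<union> S1 \<union> insert x ` (S0 \<inter> S1))"
    using fin_S insert.hyps(2) by (intro card_Un_disjoint [symmetric]) (auto simp: S0_def S1_def)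
  also have "\<dots> \<le> card {U \<in> Pow (insert x V). shatters F U}"
  proof (rule card_mono)
    show "finite {U \<in> Pow (insert x V). shatters F U}" using insert.hyps(1) by simp
    have x_notin: "x \<notin> U" if "U \<in> S0 \<union> S1" for U
      using that insert.hyps(2) by (auto simp: S0_def S1_def)
    have "shatters F U" if "U \<in> S0" for U
      using that shatters_mono[of F0 F U] by (auto simp: S0_def F0_def)
    moreover have "shatters F U" if "U \<in> S1" for U
      using that x_notin[of U] shatters_remove_point[of x U F] by (simp add: S1_def F1_def)
    moreover have "shatters F (insert x U)" if "U \<in> S0 \<inter> S1" for U
      using that x_notin[of U] shatters_insert_point[of x U F] by (simp add: S0_def S1_def F0_def F1_def)
    ultimately show "S0 \<union> S1 \<union> insert x ` (S0 \<inter> S1) \<subseteq> {U \<in> Pow (insert x V). shatters F U}"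
      unfolding S0_def S1_def by blast
  qed
  finally show ?case .
qed

lemma vc_dim_less_ext:
  assumes "vc_dim_less V H k"
  shows "vc_dim_less V (ext k V H) k"
  unfolding vc_dim_less_def
proof (intro allI impI, rule ccontr)
  fix U assume U: "U \<subseteq> V" "shatters (ext k V H) U" "\<not> card U < k"
  then obtain S where S: "S \<subseteq> U" "card S = k"
    by (meson not_less obtain_subset_with_card_n)
  have "shatters H S" unfolding shatters_def
  proof (intro allI impI)
    fix S' assume "S' \<subseteq> S"
    then obtain E where E: "E \<in> ext k V H" "E \<inter> U = S'"
      using U(2) S(1) unfolding shatters_def by (meson order_trans)
    then have "(S', S) \<in> traces k V E"
      using S U(1) \<open>S' \<subseteq> S\<close> unfolding traces_def by auto
    then have "(S', S) \<in> traces_hg k V H" using E(1) unfolding ext_def by auto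
    then show "\<exists>F\<in>H. F \<inter> S = S'" unfolding traces_hg_def traces_def by auto
  qed
  then show False using assms S U(1) unfolding vc_dim_less_def by auto
qed

lemma card_subsets_card_less_le:
  assumes "finite V" and "V \<noteq> {}"
  shows "card {U \<in> Pow V. card U < k} \<le> k * card V ^ k"
proof -
  let ?n = "card V"
  have "?n \<ge> 1" using assms by (simp add: Suc_leI card_gt_0_iff)
  have small: "{U \<in> Pow V. card U < k} = (\<Union>i<k. {U. U \<subseteq> V \<and> card U = i})" by auto
  have "card {U \<in> Pow V. card U < k} \<le> (\<Sum>i<k. card {U. U \<subseteq> V \<and> card U = i})"
    unfolding small by (rule card_UN_le) simp
  also have "\<dots> = (\<Sum>i<k. ?n choose i)" using n_subsets[OF assms(1)] by simp
  also have "\<dots> \<le> (\<Sum>i<k. ?n ^ k)"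
  proof (rule sum_mono)
    fix i assume "i \<in> {..<k}"
    then have "?n ^ i \<le> ?n ^ k" using \<open>?n \<ge> 1\<close> by (intro power_increasing) auto
    then show "?n choose i \<le> ?n ^ k"
      using binomial_le_pow[of i ?n] by (cases "i \<le> ?n") (auto simp: binomial_eq_0)
  qed
  finally show ?thesis by simp
qed

theorem corollary2:
  fixes k :: nat
  shows "\<exists>C::real. \<forall>(V::'a set) H.
           finite V \<and> V \<noteq> {} \<and> (\<forall>F\<in>H. F \<subseteq> V) \<and> vc_dim_less V H k \<longrightarrow>
           real (card (ext k V H)) \<le> C * real (card V) ^ k"
proof (intro exI[of _ "real k"] allI impI)
  fix V :: "'a set" and H
  \<comment> \<open>\<open>H\<close> need not live on \<open>V\<close>: \<open>ext k V H\<close> consists of subsets of \<open>V\<close> anyway.\<close>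
  assume "finite V \<and> V \<noteq> {} \<and> (\<forall>F\<in>H. F \<subseteq> V) \<and> vc_dim_less V H k"
  then have V: "finite V" "V \<noteq> {}" and vc: "vc_dim_less V (ext k V H) k"
    using vc_dim_less_ext by blast+
  have "ext k V H \<subseteq> Pow V" by (auto simp: ext_def)
  then have "card (ext k V H) \<le> card {U \<in> Pow V. shatters (ext k V H) U}"
    by (rule card_le_card_shattered[OF V(1)])
  also have "\<dots> \<le> card {U \<in> Pow V. card U < k}"
    using vc V(1) unfolding vc_dim_less_def by (intro card_mono) auto
  also have "\<dots> \<le> k * card V ^ k" using card_subsets_card_less_le[OF V] .
  finally have "card (ext k V H) \<le> k * card V ^ k" .
  then show "real (card (ext k V H)) \<le> real k * real (card V) ^ k"
    by (metis of_nat_le_iff of_nat_mult of_nat_power)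
qed

end
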